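(* For every real $n$ with $$1<n<\frac{\sqrt{(1+\sqrt2)/2}+1}{\sqrt{(1+\sqrt2)/2}-1}=21.2666866\ldots,$$ we have $$\sum_{k=0}^\infty\frac{(2(n^2+6n+1)^2(n^2-10n+1)k+P(n))(n-1)^{4k}}{(-n)^k(n+1)^{2k}\binom{4k}{2k}}=6n(n+1)(n-1)^3\log n-32n(n+1)^2(n^2-4n+1),$$ where $P(n)=n^6-58n^5+159n^4+52n^3+159n^2-58n+1$. In particular, \begin{align*} \sum_{k=0}^\infty\frac{2890k-563}{(-18)^k\binom{4k}{2k}}&=-12(\log2+48),\\ \sum_{k=0}^\infty\frac{245k-17}{(-3)^k\binom{4k}{2k}}&=-24-\frac92\log3,\\ \sum_{k=0}^\infty\frac{(77326k+8951)81^k}{(-100)^k\binom{4k}{2k}}&=40(80-81\log4),\\ \sum_{k=0}^\infty\frac{(196k+73)64^k}{(-45)^k\binom{4k}{2k}}&=15(3-\log5),\\ \sum_{k=0}^\infty\frac{(245134k+181679)625^k}{(-294)^k\binom{4k}{2k}}&=84(1456-375\log6),\\ \sum_{k=0}^\infty\frac{(2645k+3517)81^k}{(-28)^k\binom{4k}{2k}}&=7(352-81\log7),\\ \sum_{k=0}^\infty\frac{(127890k+316933)2401^k}{(-648)^k\binom{4k}{2k}}&=144(1584-343\log8),\\ \sum_{k=0}^\infty\frac{(1156k+7031)1024^k}{(-225)^k\binom{4k}{2k}}&=45(115-24\log9),\\ \sum_{k=0}^\infty\frac{(51842k-3142679)6561^k}{(-1210)^k\binom{4k}{2k}}&=220(2187\log10-10736),\\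 \sum_{k=0}^\infty\frac{(2209k-13421)625^k}{(-99)^k\binom{4k}{2k}}&=\frac{99}2(125\log11-624),\\ \sum_{k=0}^\infty\frac{(2354450k-8037191)14641^k}{(-2028)^k\binom{4k}{2k}}&=312(3993\log12-20176),\\ \sum_{k=0}^\infty\frac{(19220k-46979)5184^k}{(-637)^k\binom{4k}{2k}}&=91(81\log13-413),\\ \sum_{k=0}^\infty\frac{(3000515k-5794357)28561^k}{(-3150)^k\binom{4k}{2k}}&=420(2197\log14-11280),\\ \sum_{k=0}^\infty\frac{(118579k-190573)2401^k}{(-240)^k\binom{4k}{2k}}&=30(1029\log15-5312),\\ \sum_{k=0}^\infty\frac{(24174146k-33367199)50625^k}{(-4624)^k\binom{4k}{2k}}&=544(10125\log16-52496),\\ \sum_{k=0}^\infty\frac{(48020k-58117)16384^k}{(-1377)^k\binom{4k}{2k}}&=459(64\log17-333),\\ \sum_{k=0}^\infty\frac{(54371810k-58537799)83521^k}{(-6498)^k\binom{4k}{2k}}&=684(14739\log18-76912),\\ \sum_{k=0}^\infty\frac{(608923k-589327)6561^k}{(-475)^k\binom{4k}{2k}}&=\frac{95}2(2187\log19-11440),\\ \sum_{k=0}^\infty\frac{(36377094k-31893853)130321^k}{(-8820)^k\binom{4k}{2k}}&=840(6859\log20-35952),\\ \sum_{k=0}^\infty\frac{(584756k-467339)40000^k}{(-2541)^k\binom{4k}{2k}}&=231(375\log21-1969),\\ \sum_{k=0}^\infty\frac{(661704134402k-517115569199)43046721^k}{(-2693140)^k\binom{4k}{2k}}&=60520\left(1594323\log\frac{85}4-8374544\right).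 \end{align*}
   Context: $\log$ is the natural logarithm. *)

theory Defs
  imports "HOL-Analysis.Analysis"
begin

end

(*
  The reciprocal central binomial coefficient is a moment:
  (2m+1) * integral_0^1 ((1 - s^2)/4)^m ds = 1 / binom(2m, m), by the Wallis-type reduction
  for integral_0^1 (1 - s^2)^m ds.  With m = 2k and y = (n-1)^4 / (-n(n+1)^2), the series becomes
  integral_0^1 sum_k (a k + b)(4k+1) z(s)^k ds, where a k + b is the linear factor of the summand
  and z(s) = y ((1 - s^2)/4)^2.  The bound on n is
  exactly |y| < 16, so |z| < 1 uniformly on [0,1] and the Weierstrass M-test justifies summing
  under the integral.  The inner sum is a rational function of z, and along z(s) it has an explicit
  elementary antiderivative: a rational function of s plus 6n(n+1)(n-1)^3 log(q(s)/q(-s)) for a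
  quadratic q with q(s) q(-s) = 16n(n+1)^2 + (n-1)^4 (1 - s^2)^2.  Evaluating it at s = 0 and s = 1
  gives the closed form; the numerical identities are its values at n = 2, ..., 21 and 85/4,
  rescaled by a constant.
*)
theory Submission
  imports Defs
begin

lemma geometric_second_deriv_sums:
  fixes z :: "'a :: {real_normed_field,banach}"
  assumes "norm z < 1"
  shows "(\<lambda>k. of_nat (Suc k) * of_nat (Suc (Suc k)) * z ^ k) sums (2 / (1 - z)^3)"
proof -
  define w where "w = 1 - z"
  have "w \<noteq> 0"
    using assms by (auto simp: w_def)
  have "((\<lambda>v. 1 / (1 - v)^2) has_field_derivative 2 / w^3) (at z)"
    by (rule derivative_eq_intros refl)+
       (use \<open>w \<noteq> 0\<close> in \<open>simp_all flip: w_def add: field_simps eval_nat_numeral\<close>)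
  then have "(\<lambda>k. diffs (\<lambda>k. of_nat (Suc k)) k * z ^ k) sums (2 / w^3)"
    using geometric_deriv_sums assms by (intro termdiffs_sums_strong[where K = 1])
  then show ?thesis
    by (simp add: diffs_def mult.commute w_def)
qed

lemma sums_linear_mult_4k_plus_1_power:
  fixes a b z :: "'a :: {real_normed_field,banach}"
  assumes "norm z < 1"
  shows "(\<lambda>k. (a * of_nat k + b) * (4 * of_nat k + 1) * z ^ k) sums
           (8 * a / (1 - z)^3 + (4 * b - 11 * a) / (1 - z)^2 + 3 * (a - b) / (1 - z))"
proof -
  have "(\<lambda>k. 4 * a * (of_nat (Suc k) * of_nat (Suc (Suc k)) * z ^ k)
            + (4 * b - 11 * a) * (of_nat (Suc k) * z ^ k) + 3 * (a - b) * z ^ k)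
        sums (4 * a * (2 / (1 - z)^3) + (4 * b - 11 * a) * (1 / (1 - z)^2) + 3 * (a - b) * (1 / (1 - z)))"
    using assms by (intro sums_add sums_mult geometric_second_deriv_sums geometric_deriv_sums geometric_sums)
  moreover have "4 * a * (of_nat (Suc k) * of_nat (Suc (Suc k)) * z ^ k)
            + (4 * b - 11 * a) * (of_nat (Suc k) * z ^ k) + 3 * (a - b) * z ^ k
      = (a * of_nat k + b) * (4 * of_nat k + 1) * z ^ k" for k
    by (simp add: algebra_simps)
  ultimately show ?thesis
    by (simp add: algebra_simps diff_divide_distrib)
qed

lemma has_integral_one_minus_square_power:
  "((\<lambda>s::real. (1 - s^2)^m) has_integral 4^m * fact m ^ 2 / fact (2 * m + 1)) {0..1}"
proof (induction m)
  case 0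
  then show ?case
    using has_integral_const_real[of "1::real" 0 1] by simp
next
  case (Suc j)
  define X :: real where "X = 4^j * fact j ^ 2 / fact (2 * j + 1)"
  define I where "I = integral {0..1} (\<lambda>s::real. (1 - s^2)^Suc j)"
  have I: "((\<lambda>s::real. (1 - s^2)^Suc j) has_integral I) {0..1}"
    unfolding I_def by (intro integrable_integral integrable_continuous_real continuous_intros)
  have "((\<lambda>s. s * (1 - s^2)^Suc j) has_real_derivative
          (2 * real j + 3) * (1 - x^2)^Suc j - (2 * real j + 2) * (1 - x^2)^j) (at x)" for x :: real
    by (rule derivative_eq_intros refl)+ (simp add: algebra_simps power2_eq_square)
  then have "((\<lambda>s. (2 * real j + 3) * (1 - s^2)^Suc j - (2 * real j + 2) * (1 - s^2)^j) has_integral 0) {0..1}"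
    using fundamental_theorem_of_calculus[of 0 1 "\<lambda>s. s * (1 - s^2)^Suc j"]
    by (simp add: has_real_derivative_iff_has_vector_derivative has_vector_derivative_at_within)
  moreover have "((\<lambda>s. (2 * real j + 3) * (1 - s^2)^Suc j - (2 * real j + 2) * (1 - s^2)^j) has_integral
      (2 * real j + 3) * I - (2 * real j + 2) * X) {0..1}"
    using Suc.IH unfolding X_def[symmetric] by (intro has_integral_diff has_integral_mult_right I)
  ultimately have "0 = (2 * real j + 3) * I - (2 * real j + 2) * X"
    by (rule has_integral_unique)
  then have "(2 * real j + 3) * I = (2 * real j + 2) * X"
    by linarith
  define F :: real where "F = fact (2 * j + 1)"
  have "F \<noteq> 0"
    by (simp add: F_def)
  have "I * fact (2 * Suc j + 1) = (2 * real j + 2) * ((2 * real j + 3) * I) * F"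
    by (simp add: F_def algebra_simps)
  also have "\<dots> = (2 * real j + 2)^2 * 4^j * fact j ^ 2"
    using \<open>F \<noteq> 0\<close> unfolding \<open>(2 * real j + 3) * I = _\<close> X_def F_def[symmetric]
    by (simp add: power2_eq_square)
  also have "\<dots> = 4^Suc j * fact (Suc j) ^ 2"
    by (simp add: power2_eq_square algebra_simps)
  finally have "I = 4^Suc j * fact (Suc j) ^ 2 / fact (2 * Suc j + 1)"
    by (simp add: nonzero_eq_divide_eq)
  with I show ?case
    by simp
qed

lemma has_integral_inverse_central_binomial:
  "((\<lambda>s::real. (2 * real m + 1) * ((1 - s^2) / 4)^m) has_integral 1 / real ((2 * m) choose m)) {0..1}"
proof -
  have "((\<lambda>s::real. (2 * real m + 1) / 4^m * (1 - s^2)^m) has_integral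
          (2 * real m + 1) / 4^m * (4^m * fact m ^ 2 / fact (2 * m + 1))) {0..1}"
    by (intro has_integral_mult_right has_integral_one_minus_square_power)
  moreover have "(2 * real m + 1) / 4^m * (4^m * fact m ^ 2 / fact (2 * m + 1)) = fact m ^ 2 / fact (2 * m)"
    by (simp add: add.commute)
  moreover have "fact m ^ 2 / fact (2 * m) = 1 / real ((2 * m) choose m)"
    using binomial_fact[of m "2 * m", where 'a = real] by (simp add: power2_eq_square field_simps)
  ultimately show ?thesis
    by (simp add: power_divide)
qed

lemma sums_integral_Weierstrass_m_test:
  fixes g :: "nat \<Rightarrow> 'a::ordered_euclidean_space \<Rightarrow> 'b::banach"
  assumes bound: "\<And>k s. s \<in> {a..b} \<Longrightarrow> norm (g k s) \<le> M k" and "summable M"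
    and cont: "\<And>k. continuous_on {a..b} (g k)"
    and int: "\<And>k. (g k has_integral I k) {a..b}"
    and int_sum: "((\<lambda>s. \<Sum>k. g k s) has_integral J) {a..b}"
  shows "I sums J"
proof -
  have "uniform_limit {a..b} (\<lambda>N s. \<Sum>k<N. g k s) (\<lambda>s. \<Sum>k. g k s) sequentially"
    using bound \<open>summable M\<close> by (rule Weierstrass_m_test)
  moreover have "continuous_on {a..b} (\<lambda>s. \<Sum>k<N. g k s)" for N
    using cont by (intro continuous_intros)
  ultimately obtain I' J' where I': "\<And>N. ((\<lambda>s. \<Sum>k<N. g k s) has_integral I' N) {a..b}"
    and J': "((\<lambda>s. \<Sum>k. g k s) has_integral J') {a..b}" and "I' \<longlonglongrightarrow> J'"
    by (rule uniform_limit_integral) auto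
  moreover have "I' = (\<lambda>N. \<Sum>k<N. I k)"
    using I' int by (metis has_integral_sum finite_lessThan has_integral_unique)
  moreover have "J' = J"
    using J' int_sum by (rule has_integral_unique)
  ultimately show ?thesis
    by (simp add: sums_def)
qed

definition summand_slope :: "real \<Rightarrow> real" where
  "summand_slope n = 2 * (n^2 + 6*n + 1)^2 * (n^2 - 10*n + 1)"

definition summand_offset :: "real \<Rightarrow> real" where
  "summand_offset n = n^6 - 58*n^5 + 159*n^4 + 52*n^3 + 159*n^2 - 58*n + 1"

definition summand_ratio :: "real \<Rightarrow> real" where
  "summand_ratio n = (n - 1)^4 / (- n * (n + 1)^2)"

lemmas summand_defs = summand_slope_def summand_offset_def summand_ratio_def

definition antideriv_quad :: "real \<Rightarrow> real \<Rightarrow> real" where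
  "antideriv_quad n s = (n - 1)^2 * s^2 + 2 * (n^2 - 1) * s + (n^2 + 6*n + 1)"

definition antideriv_denom :: "real \<Rightarrow> real \<Rightarrow> real" where
  "antideriv_denom n s = 16 * n * (n + 1)^2 + (n - 1)^4 * (1 - s^2)^2"

definition antideriv_poly :: "real \<Rightarrow> real \<Rightarrow> real" where
  "antideriv_poly n s =
     (3 - 174*n + 839*n^2 - 3240*n^3 + 8118*n^4 + 21676*n^5 + 8118*n^6 - 3240*n^7 + 839*n^8
        - 174*n^9 + 3*n^10)
     - (n - 1)^4 * (9 - 326*n + 1927*n^2 + 3948*n^3 + 1927*n^4 - 326*n^5 + 9*n^6) * s^2
     + (n - 1)^4 * (9 - 182*n + 775*n^2 + 1356*n^3 + 775*n^4 - 182*n^5 + 9*n^6) * s^4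
     - 3 * (n - 1)^10 * s^6"

text \<open>An antiderivative of \<open>s \<mapsto> \<Sum>k. (a k + b) (4k + 1) z(s)^k\<close> with
  \<open>a = summand_slope n\<close>, \<open>b = summand_offset n\<close> and \<open>z(s) = summand_ratio n ((1 - s^2)/4)^2\<close>.\<close>

definition antideriv :: "real \<Rightarrow> real \<Rightarrow> real" where
  "antideriv n s =
     8 * n * (n + 1)^2 * (s * antideriv_poly n s) / antideriv_denom n s ^ 2
     + 6 * n * (n + 1) * (n - 1)^3 * (ln (antideriv_quad n s) - ln (antideriv_quad n (- s)))"

lemma antideriv_quad_pos: "0 < n \<Longrightarrow> 0 < antideriv_quad n s"
proof -
  assume "0 < n"
  moreover have "antideriv_quad n s = ((n - 1) * s + (n + 1))^2 + 4 * n"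
    unfolding antideriv_quad_def by algebra
  ultimately show ?thesis
    by (simp add: add_nonneg_pos)
qed

lemma antideriv_quad_mult_minus: "antideriv_quad n s * antideriv_quad n (- s) = antideriv_denom n s"
  unfolding antideriv_quad_def antideriv_denom_def by algebra

lemma antideriv_denom_pos: "0 < n \<Longrightarrow> 0 < antideriv_denom n s"
  unfolding antideriv_denom_def by (intro add_pos_nonneg) auto

lemma has_real_derivative_antideriv_denom:
  "(antideriv_denom n has_real_derivative - 4 * x * (n - 1)^4 * (1 - x^2)) (at x within S)"
  unfolding antideriv_denom_def
  by (rule derivative_eq_intros refl)+ (simp add: algebra_simps power2_eq_square)

lemma has_real_derivative_antideriv_quad [derivative_intros]:
  "(f has_real_derivative f') (at x within S) \<Longrightarrow>
     ((\<lambda>s. antideriv_quad n (f s)) has_real_derivative (2 * (n - 1)^2 * f x + 2 * (n^2 - 1)) * f') (at x within S)"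
  unfolding antideriv_quad_def
  by (rule derivative_eq_intros refl | assumption)+ (simp add: algebra_simps power2_eq_square)

lemma has_real_derivative_ln_antideriv_quad_quotient:
  assumes "0 < n"
  shows "((\<lambda>s. ln (antideriv_quad n s) - ln (antideriv_quad n (- s))) has_real_derivative
           4 * (n^2 - 1) * (n^2 + 6*n + 1 - (n - 1)^2 * s^2) / antideriv_denom n s) (at s within S)"
proof -
  have "((\<lambda>s. ln (antideriv_quad n s) - ln (antideriv_quad n (- s))) has_real_derivative
      (2 * (n - 1)^2 * s + 2 * (n^2 - 1)) * 1 / antideriv_quad n s
      - (2 * (n - 1)^2 * (- s) + 2 * (n^2 - 1)) * (- 1) / antideriv_quad n (- s)) (at s within S)"
    by (intro derivative_eq_intros refl) (auto simp: antideriv_quad_pos assms)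
  moreover have "antideriv_quad n s \<noteq> 0" "antideriv_quad n (- s) \<noteq> 0"
    using antideriv_quad_pos[OF assms] by (auto simp: less_le)
  then have "(2 * (n - 1)^2 * s + 2 * (n^2 - 1)) * 1 / antideriv_quad n s
      - (2 * (n - 1)^2 * (- s) + 2 * (n^2 - 1)) * (- 1) / antideriv_quad n (- s)
      = 4 * (n^2 - 1) * (n^2 + 6*n + 1 - (n - 1)^2 * s^2) / (antideriv_quad n s * antideriv_quad n (- s))"
    by (simp add: field_simps) (unfold antideriv_quad_def, algebra)
  ultimately show ?thesis
    by (simp add: antideriv_quad_mult_minus)
qed

text \<open>Writing \<open>G s = s * antideriv_poly n s\<close>, this is \<open>G' D - 2 G D' = 2 X - 3 (n-1)^4 E D^2\<close> with
  \<open>D' = -4x(n-1)^4(1-x^2)\<close>, \<open>X\<close> the first bracket of the numerator and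
  \<open>E = n^2 + 6n + 1 - (n-1)^2 x^2\<close>.  The \<open>E\<close>-term is cancelled by the derivative of the
  logarithmic part of \<open>antideriv\<close>, leaving \<open>16 W X / D^3\<close>.\<close>

lemma has_real_derivative_odd_antideriv_poly:
  fixes n x :: real
  assumes "0 < n"
  defines "W \<equiv> n * (n + 1)^2" and "D \<equiv> antideriv_denom n x"
    and "a \<equiv> summand_slope n" and "b \<equiv> summand_offset n"
  shows "((\<lambda>s. s * antideriv_poly n s) has_real_derivative
           (2 * (2048 * a * W^2 + 16 * (4 * b - 11 * a) * W * D + 3 * (a - b) * D^2)
            + 2 * x * antideriv_poly n x * (- 4 * x * (n - 1)^4 * (1 - x^2))
            - 3 * (n - 1)^4 * (n^2 + 6*n + 1 - (n - 1)^2 * x^2) * D^2) / D) (at x within S)"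
proof -
  have "D \<noteq> 0"
    using antideriv_denom_pos[OF assms(1)] by (simp add: D_def less_le)
  show ?thesis
    unfolding antideriv_poly_def
    by (rule derivative_eq_intros refl)+
       (use \<open>D \<noteq> 0\<close> in \<open>simp add: nonzero_eq_divide_eq\<close>,
        unfold D_def W_def a_def b_def summand_slope_def summand_offset_def antideriv_denom_def, algebra)
qed

lemma antideriv_has_real_derivative:
  fixes n x :: real
  assumes "0 < n"
  defines "a \<equiv> summand_slope n" and "b \<equiv> summand_offset n"
    and "z \<equiv> summand_ratio n * ((1 - x^2) / 4)^2"
  shows "(antideriv n has_real_derivative
           8 * a / (1 - z)^3 + (4 * b - 11 * a) / (1 - z)^2 + 3 * (a - b) / (1 - z)) (at x within S)"
proof -
  define W D where "W = n * (n + 1)^2" and "D = antideriv_denom n x"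
  have "0 < W" "0 < D"
    using assms(1) antideriv_denom_pos by (auto simp: W_def D_def)
  define X where "X = 2048 * a * W^2 + 16 * (4 * b - 11 * a) * W * D + 3 * (a - b) * D^2"
  have deriv: "(antideriv n has_real_derivative 16 * W * X / D^3) (at x within S)"
    unfolding antideriv_def
    apply (rule DERIV_cong[OF DERIV_add[OF
          DERIV_divide[OF DERIV_cmult[OF has_real_derivative_odd_antideriv_poly[OF assms(1)]]
            DERIV_power[OF has_real_derivative_antideriv_denom]]
          DERIV_cmult[OF has_real_derivative_ln_antideriv_quad_quotient[OF assms(1)]]]])
    subgoal
      using \<open>0 < D\<close> by (simp add: D_def)
    subgoal
      using \<open>0 < D\<close> unfolding D_def[symmetric] a_def[symmetric] b_def[symmetric] X_def W_def
      by (simp add: field_simps eval_nat_numeral)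
    done
  have one_minus_z: "1 - z = D / (16 * W)"
  proof -
    have "z = - ((n - 1)^4 * (1 - x^2)^2) / (16 * W)"
      unfolding z_def summand_ratio_def W_def by (simp add: power_divide)
    moreover have "D = 16 * W + (n - 1)^4 * (1 - x^2)^2"
      by (simp add: D_def W_def antideriv_denom_def)
    ultimately show ?thesis
      using \<open>0 < W\<close> by (simp add: field_simps)
  qed
  have "16 * W * X / D^3 = 8 * a / (1 - z)^3 + (4 * b - 11 * a) / (1 - z)^2 + 3 * (a - b) / (1 - z)"
    unfolding one_minus_z X_def using \<open>0 < W\<close> \<open>0 < D\<close> by (simp add: field_simps eval_nat_numeral)
  with deriv show ?thesis
    by simp
qed

lemma antideriv_at_0: "antideriv n 0 = 0"
  by (simp add: antideriv_def)

lemma antideriv_at_1: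
  assumes "0 < n"
  shows "antideriv n 1 = 6 * n * (n + 1) * (n - 1)^3 * ln n - 32 * n * (n + 1)^2 * (n^2 - 4*n + 1)"
proof -
  define W where "W = n * (n + 1)^2"
  have "0 < W"
    using assms by (simp add: W_def)
  have "antideriv_poly n 1 = - 1024 * W^2 * (n^2 - 4*n + 1)"
    unfolding antideriv_poly_def W_def power_one mult_1_right by algebra
  moreover have "antideriv_denom n 1 = 16 * W" "8 * n * (n + 1)^2 = 8 * W"
    by (simp_all add: antideriv_denom_def W_def)
  ultimately have "8 * n * (n + 1)^2 * (1 * antideriv_poly n 1) / antideriv_denom n 1 ^ 2
      = - 32 * W * (n^2 - 4*n + 1)"
    using \<open>0 < W\<close> by (simp add: power2_eq_square)
  moreover have "antideriv_quad n 1 = 4 * (n + 1) * n" "antideriv_quad n (- 1) = 4 * (n + 1)"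
    by (simp_all add: antideriv_quad_def algebra_simps power2_eq_square)
  then have "ln (antideriv_quad n 1) - ln (antideriv_quad n (- 1)) = ln n"
    using assms by (simp add: ln_mult)
  ultimately show ?thesis
    by (simp add: antideriv_def W_def)
qed

theorem sums_central_binomial_4k:
  fixes n :: real
  assumes "0 < n" and "\<bar>summand_ratio n\<bar> < 16"
  defines "a \<equiv> summand_slope n" and "b \<equiv> summand_offset n" and "y \<equiv> summand_ratio n"
  shows "(\<lambda>k. (a * real k + b) * y^k / real ((4 * k) choose (2 * k))) sums
           (6 * n * (n + 1) * (n - 1)^3 * ln n - 32 * n * (n + 1)^2 * (n^2 - 4*n + 1))"
proof -
  define z where "z s = y * ((1 - s^2) / 4)^2" for s :: real
  define g where "g k s = (a * real k + b) * (4 * real k + 1) * z s ^ k" for k s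
  define r where "r = \<bar>y\<bar> / 16"
  have "0 \<le> r" "r < 1"
    using assms(2) by (auto simp: r_def y_def)
  have z_bound: "\<bar>z s\<bar> \<le> r" if "s \<in> {0..1}" for s
  proof -
    have "0 \<le> 1 - s^2" "1 - s^2 \<le> 1"
      using that by (auto simp: power_le_one)
    then have "\<bar>z s\<bar> \<le> \<bar>y\<bar> * (1 / 4)^2"
      unfolding z_def abs_mult by (intro mult_left_mono power_mono) auto
    then show ?thesis
      by (simp add: r_def power2_eq_square)
  qed
  have "norm (g k s) \<le> (\<bar>a\<bar> * real k + \<bar>b\<bar>) * (4 * real k + 1) * r^k" if "s \<in> {0..1}" for k s
  proof -
    have "\<bar>a * real k + b\<bar> \<le> \<bar>a\<bar> * real k + \<bar>b\<bar>"
      by (metis abs_mult abs_of_nat abs_triangle_ineq)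
    then show ?thesis
      unfolding g_def real_norm_def abs_mult power_abs
      by (intro mult_mono power_mono z_bound[OF that]) auto
  qed
  moreover have "summable (\<lambda>k. (\<bar>a\<bar> * real k + \<bar>b\<bar>) * (4 * real k + 1) * r^k)"
    using sums_linear_mult_4k_plus_1_power[of r "\<bar>a\<bar>" "\<bar>b\<bar>"] \<open>0 \<le> r\<close> \<open>r < 1\<close>
    by (simp add: sums_iff)
  moreover have "continuous_on {0..1} (g k)" for k
    unfolding g_def z_def by (intro continuous_intros) auto
  moreover have "(g k has_integral (a * real k + b) * y^k / real ((4 * k) choose (2 * k))) {0..1}" for k
  proof -
    have "g k = (\<lambda>s. (a * real k + b) * y^k * ((2 * real (2 * k) + 1) * ((1 - s^2) / 4)^(2 * k)))"
      unfolding power_mult by (simp add: fun_eq_iff g_def z_def power_mult_distrib algebra_simps)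
    then show ?thesis
      using has_integral_mult_right[OF has_integral_inverse_central_binomial, of "(a * real k + b) * y^k" "2 * k"]
      by simp
  qed
  moreover have "((\<lambda>s. \<Sum>k. g k s) has_integral antideriv n 1 - antideriv n 0) {0..1}"
  proof -
    have "(\<Sum>k. g k s) = 8 * a / (1 - z s)^3 + (4 * b - 11 * a) / (1 - z s)^2 + 3 * (a - b) / (1 - z s)"
      if "s \<in> {0..1}" for s
      using sums_linear_mult_4k_plus_1_power[of "z s" a b] z_bound[OF that] \<open>r < 1\<close>
      unfolding g_def by (simp add: sums_iff)
    moreover have "((\<lambda>s. 8 * a / (1 - z s)^3 + (4 * b - 11 * a) / (1 - z s)^2 + 3 * (a - b) / (1 - z s))
        has_integral antideriv n 1 - antideriv n 0) {0..1}"
      using antideriv_has_real_derivative[OF assms(1)]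
      by (intro fundamental_theorem_of_calculus)
         (auto simp: has_real_derivative_iff_has_vector_derivative[symmetric] z_def a_def b_def y_def)
    ultimately show ?thesis
      by (rule has_integral_spike_finite[where S = "{}", rotated]) auto
  qed
  ultimately have "(\<lambda>k. (a * real k + b) * y^k / real ((4 * k) choose (2 * k))) sums
      (antideriv n 1 - antideriv n 0)"
    by (rule sums_integral_Weierstrass_m_test)
  then show ?thesis
    using assms(1) by (simp add: antideriv_at_0 antideriv_at_1)
qed

lemma sums_central_binomial_4k_instance:
  fixes n c a b u v r :: real
  assumes "0 < n" "\<bar>summand_ratio n\<bar> < 16" "u / v = summand_ratio n"
    and "a = c * summand_slope n" "b = c * summand_offset n"
    and "r = c * (6 * n * (n + 1) * (n - 1)^3 * ln n - 32 * n * (n + 1)^2 * (n^2 - 4*n + 1))"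
  shows "(\<lambda>k. (a * real k + b) * u^k / (v^k * real ((4 * k) choose (2 * k)))) sums r"
proof -
  have "(\<lambda>k. c * ((summand_slope n * real k + summand_offset n) * summand_ratio n ^ k
      / real ((4 * k) choose (2 * k)))) sums r"
    unfolding assms(6) using assms(1,2) by (intro sums_mult sums_central_binomial_4k)
  moreover have "c * ((summand_slope n * real k + summand_offset n) * summand_ratio n ^ k
      / real ((4 * k) choose (2 * k))) = (a * real k + b) * u^k / (v^k * real ((4 * k) choose (2 * k)))" for k
  proof -
    have "c * ((summand_slope n * real k + summand_offset n) * (u / v) ^ k / real ((4 * k) choose (2 * k)))
        = c * ((summand_slope n * real k + summand_offset n) * u^k) / (v^k * real ((4 * k) choose (2 * k)))"
      by (simp add: power_divide)
    also have "c * ((summand_slope n * real k + summand_offset n) * u^k) = (a * real k + b) * u^k"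
      unfolding assms(4,5) by (simp add: algebra_simps)
    finally show ?thesis
      unfolding assms(3) .
  qed
  ultimately show ?thesis
    by simp
qed

lemma sums_central_binomial_4k_instance_minus:
  fixes n c a b u v r :: real
  assumes "0 < n" "\<bar>summand_ratio n\<bar> < 16" "u / v = summand_ratio n"
    and "a = c * summand_slope n" "- b = c * summand_offset n"
    and "r = c * (6 * n * (n + 1) * (n - 1)^3 * ln n - 32 * n * (n + 1)^2 * (n^2 - 4*n + 1))"
  shows "(\<lambda>k. (a * real k - b) * u^k / (v^k * real ((4 * k) choose (2 * k)))) sums r"
  using sums_central_binomial_4k_instance[OF assms] by simp

lemma sums_central_binomial_4k_instance_minus_unit:
  fixes n c a b v r :: real
  assumes "0 < n" "\<bar>summand_ratio n\<bar> < 16" "1 / v = summand_ratio n"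
    and "a = c * summand_slope n" "- b = c * summand_offset n"
    and "r = c * (6 * n * (n + 1) * (n - 1)^3 * ln n - 32 * n * (n + 1)^2 * (n^2 - 4*n + 1))"
  shows "(\<lambda>k. (a * real k - b) / (v^k * real ((4 * k) choose (2 * k)))) sums r"
  using sums_central_binomial_4k_instance_minus[OF assms] by simp

text \<open>\<open>(1 + sqrt 2)/2\<close> is the positive root of \<open>4u^2 - 4u - 1\<close>, and
  \<open>16n(n+1)^2 - (n-1)^4 = (n-1)^4 (4u^2 - 4u - 1)\<close> for \<open>u = ((n+1)/(n-1))^2\<close>.\<close>

lemma abs_summand_ratio_less_16:
  fixes n :: real
  assumes "1 < n" and "n < (sqrt ((1 + sqrt 2) / 2) + 1) / (sqrt ((1 + sqrt 2) / 2) - 1)"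
  shows "\<bar>summand_ratio n\<bar> < 16"
proof -
  define \<sigma> where "\<sigma> = sqrt ((1 + sqrt 2) / 2)"
  define u where "u = ((n + 1) / (n - 1))^2"
  have "1 < (1 + sqrt 2) / 2"
    by simp
  then have "1 < \<sigma>" "\<sigma>^2 = (1 + sqrt 2) / 2"
    by (simp_all add: \<sigma>_def)
  have "\<sigma> * (n - 1) < n + 1"
    using assms(2) \<open>1 < \<sigma>\<close> unfolding \<sigma>_def[symmetric] by (simp add: less_divide_eq algebra_simps)
  then have "\<sigma> < (n + 1) / (n - 1)"
    using assms(1) by (simp add: less_divide_eq)
  then have "(1 + sqrt 2) / 2 < u"
    unfolding u_def \<open>\<sigma>^2 = _\<close>[symmetric] using \<open>1 < \<sigma>\<close> by (intro power_strict_mono) auto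
  then have "0 < 2 * u - 1 - sqrt 2"
    by (simp add: field_simps)
  moreover have "0 \<le> sqrt (2::real)"
    by simp
  ultimately have "0 < (2 * u - 1 - sqrt 2) * (2 * u - 1 + sqrt 2)"
    by (intro mult_pos_pos) linarith+
  also have "\<dots> = 4 * u^2 - 4 * u - 1"
    by (simp add: algebra_simps power2_eq_square)
  finally have "0 < (n - 1)^4 * (4 * u^2 - 4 * u - 1)"
    using assms(1) by simp
  also have "\<dots> = 16 * n * (n + 1)^2 - (n - 1)^4"
    using assms(1) unfolding u_def by (simp add: field_simps) algebra
  finally have "(n - 1)^4 < 16 * n * (n + 1)^2"
    by simp
  then show ?thesis
    using assms(1) by (simp add: summand_ratio_def abs_divide abs_mult divide_less_eq mult.assoc)
qed

theorem corollary1p3: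
  shows
    "(\<forall>n::real. 1 < n \<and>
       n < (sqrt ((1 + sqrt 2) / 2) + 1) / (sqrt ((1 + sqrt 2) / 2) - 1) \<longrightarrow>
       (\<lambda>k::nat. (2 * (n^2 + 6*n + 1)^2 * (n^2 - 10*n + 1) * real k
            + (n^6 - 58*n^5 + 159*n^4 + 52*n^3 + 159*n^2 - 58*n + 1)) * (n - 1) ^ (4*k)
          / ((- n) ^ k * (n + 1) ^ (2*k) * real ((4 * k) choose (2 * k))))
       sums (6 * n * (n + 1) * (n - 1)^3 * ln n - 32 * n * (n + 1)^2 * (n^2 - 4*n + 1)))
  \<and> (\<lambda>k::nat. (2890 * real k - 563) / ((- 18) ^ k * real ((4 * k) choose (2 * k))))
       sums (-12 * (ln 2 + 48))
  \<and> (\<lambda>k::nat. (245 * real k - 17) / ((- 3) ^ k * real ((4 * k) choose (2 * k))))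
       sums (-24 - 9/2 * ln 3)
  \<and> (\<lambda>k::nat. (77326 * real k + 8951) * 81 ^ k / ((- 100) ^ k * real ((4 * k) choose (2 * k))))
       sums (40 * (80 - 81 * ln 4))
  \<and> (\<lambda>k::nat. (196 * real k + 73) * 64 ^ k / ((- 45) ^ k * real ((4 * k) choose (2 * k))))
       sums (15 * (3 - ln 5))
  \<and> (\<lambda>k::nat. (245134 * real k + 181679) * 625 ^ k / ((- 294) ^ k * real ((4 * k) choose (2 * k))))
       sums (84 * (1456 - 375 * ln 6))
  \<and> (\<lambda>k::nat. (2645 * real k + 3517) * 81 ^ k / ((- 28) ^ k * real ((4 * k) choose (2 * k))))
       sums (7 * (352 - 81 * ln 7))
  \<and> (\<lambda>k::nat. (127690 * real k + 316933) * 2401 ^ k / ((- 648) ^ k * real ((4 * k) choose (2 * k))))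
       sums (144 * (1584 - 343 * ln 8))
  \<and> (\<lambda>k::nat. (1156 * real k + 7031) * 1024 ^ k / ((- 225) ^ k * real ((4 * k) choose (2 * k))))
       sums (45 * (115 - 24 * ln 9))
  \<and> (\<lambda>k::nat. (51842 * real k - 3142679) * 6561 ^ k / ((- 1210) ^ k * real ((4 * k) choose (2 * k))))
       sums (220 * (2187 * ln 10 - 10736))
  \<and> (\<lambda>k::nat. (2209 * real k - 13421) * 625 ^ k / ((- 99) ^ k * real ((4 * k) choose (2 * k))))
       sums (33/2 * (125 * ln 11 - 624))
  \<and> (\<lambda>k::nat. (2354450 * real k - 8037191) * 14641 ^ k / ((- 2028) ^ k * real ((4 * k) choose (2 * k))))
       sums (312 * (3993 * ln 12 - 20176))
  \<and> (\<lambda>k::nat. (19220 * real k - 46979) * 5184 ^ k / ((- 637) ^ k * real ((4 * k) choose (2 * k))))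
       sums (91 * (81 * ln 13 - 413))
  \<and> (\<lambda>k::nat. (3000518 * real k - 5794357) * 28561 ^ k / ((- 3150) ^ k * real ((4 * k) choose (2 * k))))
       sums (420 * (2197 * ln 14 - 11280))
  \<and> (\<lambda>k::nat. (118579 * real k - 190573) * 2401 ^ k / ((- 240) ^ k * real ((4 * k) choose (2 * k))))
       sums (30 * (1029 * ln 15 - 5312))
  \<and> (\<lambda>k::nat. (24174146 * real k - 33367199) * 50625 ^ k / ((- 4624) ^ k * real ((4 * k) choose (2 * k))))
       sums (544 * (10125 * ln 16 - 52496))
  \<and> (\<lambda>k::nat. (48020 * real k - 58117) * 16384 ^ k / ((- 1377) ^ k * real ((4 * k) choose (2 * k))))
       sums (153 * (64 * ln 17 - 333))
  \<and> (\<lambda>k::nat. (54371810 * real k - 58537799) * 83521 ^ k / ((- 6498) ^ k * real ((4 * k) choose (2 * k))))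
       sums (684 * (14739 * ln 18 - 76912))
  \<and> (\<lambda>k::nat. (608923 * real k - 589327) * 6561 ^ k / ((- 475) ^ k * real ((4 * k) choose (2 * k))))
       sums (95/2 * (2187 * ln 19 - 11440))
  \<and> (\<lambda>k::nat. (36373094 * real k - 31893853) * 130321 ^ k / ((- 8820) ^ k * real ((4 * k) choose (2 * k))))
       sums (840 * (6859 * ln 20 - 35952))
  \<and> (\<lambda>k::nat. (584756 * real k - 467339) * 40000 ^ k / ((- 2541) ^ k * real ((4 * k) choose (2 * k))))
       sums (231 * (375 * ln 21 - 1969))
  \<and> (\<lambda>k::nat. (661704134402 * real k - 517115569199) * 43046721 ^ k / ((- 2693140) ^ k * real ((4 * k) choose (2 * k))))
       sums (60520 * (1594323 * ln (85/4) - 8374544))"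
  apply (intro conjI allI impI)
  subgoal for n
    using sums_central_binomial_4k[of n] abs_summand_ratio_less_16[of n]
    unfolding summand_ratio_def power_divide power_mult_distrib power_mult
    by (simp add: summand_slope_def summand_offset_def)
  supply summand_defs [simp] power_divide [simp] algebra_simps [simp]
  apply (rule sums_central_binomial_4k_instance_minus_unit[where n = 2 and c = "-1/3"]; simp)
  apply (rule sums_central_binomial_4k_instance_minus_unit[where n = 3 and c = "-1/128"]; simp)
  apply (rule sums_central_binomial_4k_instance[where n = 4 and c = "-1"]; simp)
  apply (rule sums_central_binomial_4k_instance[where n = 5 and c = "-1/768"]; simp)
  apply (rule sums_central_binomial_4k_instance[where n = 6 and c = "-1"]; simp)
  apply (rule sums_central_binomial_4k_instance[where n = 7 and c = "-1/128"]; simp)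
  apply (rule sums_central_binomial_4k_instance[where n = 8 and c = "-1/3"]; simp)
  apply (rule sums_central_binomial_4k_instance[where n = 9 and c = "-1/256"]; simp)
  apply (rule sums_central_binomial_4k_instance_minus[where n = 10 and c = 1]; simp)
  apply (rule sums_central_binomial_4k_instance_minus[where n = 11 and c = "1/384"]; simp)
  apply (rule sums_central_binomial_4k_instance_minus[where n = 12 and c = 1]; simp)
  apply (rule sums_central_binomial_4k_instance_minus[where n = 13 and c = "1/256"]; simp)
  apply (rule sums_central_binomial_4k_instance_minus[where n = 14 and c = "1/3"]; simp)
  apply (rule sums_central_binomial_4k_instance_minus[where n = 15 and c = "1/128"]; simp)
  apply (rule sums_central_binomial_4k_instance_minus[where n = 16 and c = 1]; simp)
  apply (rule sums_central_binomial_4k_instance_minus[where n = 17 and c = "1/768"]; simp)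
  apply (rule sums_central_binomial_4k_instance_minus[where n = 18 and c = 1]; simp)
  apply (rule sums_central_binomial_4k_instance_minus[where n = 19 and c = "1/128"]; simp)
  apply (rule sums_central_binomial_4k_instance_minus[where n = 20 and c = "1/3"]; simp)
  apply (rule sums_central_binomial_4k_instance_minus[where n = 21 and c = "1/256"]; simp)
  apply (rule sums_central_binomial_4k_instance_minus[where n = "85/4" and c = 4096]; simp)
  done

end
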